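(* Let $N$ be a finitely generated, semipositive binoid, $T$ an $N$-set generated by $r$ elements, and $\mathfrak n$ an $N_+$-primary ideal of $N$. Let $n_1,\dots,n_s\in N_+$ be such that every element of $N$ is either a unit or of the form $u+a_1n_1+\cdots+a_sn_s$ with $u\in N^\times$, $a_j\in\mathbb N$. Then there is a constant $D$, independent of $q$, such that for every $q\in\mathbb N_+$ the pointed set $T/([q]\mathfrak n+T)$ is finite and $$\#\,T/([q]\mathfrak n+T)\le r|N^\times|+Dq^s.$$
   Context: A binoid $(N,+,0,\infty)$ is a commutative monoid $(N,+,0)$ with an element $\infty$ satisfying $a+\infty=\infty$ for all $a\in N$. Write $N^\times$ for the group of units of $N$ and $N_+=N\setminus N^\times$. $N$ is finitely generated if it is finitely generated as a monoid; semipositive if $N\neq\{\infty\}$ and $N^\times$ is finite. An ideal of $N$ is a nonempty subset $I\subseteq N$ with $I+N\subseteq I$ (so $\infty\in I$). For an ideal $I$ and $q\in\mathbb N_+$, $[q]I$ denotes the ideal generated by $\{qa: a\in I\}$. An ideal $\mathfrak n$ is $N_+$-primary if $\mathfrak n\subseteq N_+$ and for every $a\in N_+$ there is $k\ge1$ with $ka\in\mathfrak n$. An $N$-set is a pointed set $(S,p)$ with a map $N\times S\to S$, $(n,s)\mapsto n+s$, such that $(n+m)+s=n+(m+s)$, $0+s=s$, $\infty+s=p$ and $n+p=p$. It is generated by $s_1,\dots,s_r\in S$ if $S=\bigcup_j (N+s_j)$. For an ideal $J$ and an $N$-set $T$, $J+T=\{a+t:a\in J,t\in T\}$ is an $N$-subset;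 for an $N$-subset $S\subseteq T$, the quotient $T/S$ is the $N$-set $(T\setminus S)\cup\{p\}$. For a finite pointed set $S$ we write $\#S=|S|-1$. *)

theory Defs
  imports Complex_Main
begin

definition binoid :: "'a set \<Rightarrow> ('a \<Rightarrow> 'a \<Rightarrow> 'a) \<Rightarrow> 'a \<Rightarrow> 'a \<Rightarrow> bool" where
  "binoid N add z om \<longleftrightarrow> z \<in> N \<and> om \<in> N \<and> (\<forall>a\<in>N. \<forall>b\<in>N. add a b \<in> N)
     \<and> (\<forall>a\<in>N. \<forall>b\<in>N. \<forall>c\<in>N. add (add a b) c = add a (add b c))
     \<and> (\<forall>a\<in>N. \<forall>b\<in>N. add a b = add b a)
     \<and> (\<forall>a\<in>N. add a z = a)
     \<and> (\<forall>a\<in>N. add a om = om)"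

definition bunits :: "'a set \<Rightarrow> ('a \<Rightarrow> 'a \<Rightarrow> 'a) \<Rightarrow> 'a \<Rightarrow> 'a set" where
  "bunits N add z = {a \<in> N. \<exists>b\<in>N. add a b = z}"

definition bpos :: "'a set \<Rightarrow> ('a \<Rightarrow> 'a \<Rightarrow> 'a) \<Rightarrow> 'a \<Rightarrow> 'a set" where
  "bpos N add z = N - bunits N add z"

inductive_set mon_gen :: "('a \<Rightarrow> 'a \<Rightarrow> 'a) \<Rightarrow> 'a \<Rightarrow> 'a set \<Rightarrow> 'a set"
  for add z G where
  zero: "z \<in> mon_gen add z G"
| gen: "g \<in> G \<Longrightarrow> g \<in> mon_gen add z G"
| add: "a \<in> mon_gen add z G \<Longrightarrow> b \<in> mon_gen add z G \<Longrightarrow> add a b \<in> mon_gen add z G"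

definition fin_gen_binoid :: "'a set \<Rightarrow> ('a \<Rightarrow> 'a \<Rightarrow> 'a) \<Rightarrow> 'a \<Rightarrow> bool" where
  "fin_gen_binoid N add z \<longleftrightarrow> (\<exists>G. finite G \<and> G \<subseteq> N \<and> N = mon_gen add z G)"

definition semipositive :: "'a set \<Rightarrow> ('a \<Rightarrow> 'a \<Rightarrow> 'a) \<Rightarrow> 'a \<Rightarrow> 'a \<Rightarrow> bool" where
  "semipositive N add z om \<longleftrightarrow> N \<noteq> {om} \<and> finite (bunits N add z)"

definition nmul :: "('a \<Rightarrow> 'a \<Rightarrow> 'a) \<Rightarrow> 'a \<Rightarrow> nat \<Rightarrow> 'a \<Rightarrow> 'a" where
  "nmul add z k a = ((add a) ^^ k) z"

fun bsum :: "('a \<Rightarrow> 'a \<Rightarrow> 'a) \<Rightarrow> 'a \<Rightarrow> (nat \<Rightarrow> 'a) \<Rightarrow> nat \<Rightarrow> 'a" where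
  "bsum add z f 0 = z"
| "bsum add z f (Suc k) = add (bsum add z f k) (f k)"

definition bideal :: "'a set \<Rightarrow> ('a \<Rightarrow> 'a \<Rightarrow> 'a) \<Rightarrow> 'a set \<Rightarrow> bool" where
  "bideal N add I \<longleftrightarrow> I \<noteq> {} \<and> I \<subseteq> N \<and> (\<forall>a\<in>I. \<forall>n\<in>N. add a n \<in> I)"

definition ideal_gen :: "'a set \<Rightarrow> ('a \<Rightarrow> 'a \<Rightarrow> 'a) \<Rightarrow> 'a set \<Rightarrow> 'a set" where
  "ideal_gen N add S = {add s n | s n. s \<in> S \<and> n \<in> N}"

text \<open>[q]I: the ideal generated by {q a : a in I}.\<close>
definition qideal :: "'a set \<Rightarrow> ('a \<Rightarrow> 'a \<Rightarrow> 'a) \<Rightarrow> 'a \<Rightarrow> nat \<Rightarrow> 'a set \<Rightarrow> 'a set" where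
  "qideal N add z q I = ideal_gen N add ((nmul add z q) ` I)"

definition primary_ideal :: "'a set \<Rightarrow> ('a \<Rightarrow> 'a \<Rightarrow> 'a) \<Rightarrow> 'a \<Rightarrow> 'a set \<Rightarrow> bool" where
  "primary_ideal N add z I \<longleftrightarrow> bideal N add I \<and> I \<subseteq> bpos N add z
     \<and> (\<forall>a\<in>bpos N add z. \<exists>k\<ge>1. nmul add z k a \<in> I)"

definition nset :: "'a set \<Rightarrow> ('a \<Rightarrow> 'a \<Rightarrow> 'a) \<Rightarrow> 'a \<Rightarrow> 'a \<Rightarrow> 'b set \<Rightarrow> 'b \<Rightarrow> ('a \<Rightarrow> 'b \<Rightarrow> 'b) \<Rightarrow> bool" where
  "nset N add z om S p act \<longleftrightarrow> p \<in> S \<and> (\<forall>n\<in>N. \<forall>s\<in>S. act n s \<in> S)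
     \<and> (\<forall>n\<in>N. \<forall>m\<in>N. \<forall>s\<in>S. act (add n m) s = act n (act m s))
     \<and> (\<forall>s\<in>S. act z s = s) \<and> (\<forall>s\<in>S. act om s = p) \<and> (\<forall>n\<in>N. act n p = p)"

definition nset_generated_by :: "'a set \<Rightarrow> 'b set \<Rightarrow> ('a \<Rightarrow> 'b \<Rightarrow> 'b) \<Rightarrow> (nat \<Rightarrow> 'b) \<Rightarrow> nat \<Rightarrow> bool" where
  "nset_generated_by N S act g r \<longleftrightarrow> (\<forall>j<r. g j \<in> S) \<and> S = (\<Union>j<r. (\<lambda>n. act n (g j)) ` N)"

definition ideal_act :: "('a \<Rightarrow> 'b \<Rightarrow> 'b) \<Rightarrow> 'a set \<Rightarrow> 'b set \<Rightarrow> 'b set" where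
  "ideal_act act J T = {act a t | a t. a \<in> J \<and> t \<in> T}"

definition nset_quot :: "'b set \<Rightarrow> 'b \<Rightarrow> 'b set \<Rightarrow> 'b set" where
  "nset_quot T p S = (T - S) \<union> {p}"

end

theory Submission
  imports Defs "HOL-Library.FuncSet"
begin

text \<open>Choose \<open>k\<^sub>j\<close> with \<open>k\<^sub>j n\<^sub>j \<in> \<frak>n\<close> and let \<open>K = \<Sum> k\<^sub>j\<close>. If some exponent of
  \<open>x = u + \<Sum> a\<^sub>j n\<^sub>j\<close> satisfies \<open>a\<^sub>j \<ge> qK\<close>, then \<open>x\<close> contains the summand \<open>q(k\<^sub>j n\<^sub>j) \<in> [q]\<frak>n\<close>,
  so \<open>x \<in> [q]\<frak>n\<close>. Hence every element outside \<open>[q]\<frak>n\<close> is a unit or one of at most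
  \<open>|N\<^sup>\<times>| (qK)\<^sup>s\<close> such sums with all exponents below \<open>qK\<close>. Each element of \<open>T/([q]\<frak>n + T)\<close> other
  than the base point is \<open>x + t\<^sub>j\<close> with \<open>x \<notin> [q]\<frak>n\<close> and \<open>t\<^sub>j\<close> one of the \<open>r\<close> generators.\<close>

lemma binoid_closed: "binoid N add z om \<Longrightarrow> a \<in> N \<Longrightarrow> b \<in> N \<Longrightarrow> add a b \<in> N"
  by (simp add: binoid_def)

lemma binoid_assoc:
  "binoid N add z om \<Longrightarrow> a \<in> N \<Longrightarrow> b \<in> N \<Longrightarrow> c \<in> N \<Longrightarrow> add (add a b) c = add a (add b c)"
  unfolding binoid_def by blast

lemma binoid_commute: "binoid N add z om \<Longrightarrow> a \<in> N \<Longrightarrow> b \<in> N \<Longrightarrow> add a b = add b a"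
  unfolding binoid_def by blast

lemma binoid_zero_left:
  assumes "binoid N add z om" "a \<in> N"
  shows "add z a = a"
proof -
  have "z \<in> N" using assms(1) by (simp add: binoid_def)
  then have "add z a = add a z" using binoid_commute[OF assms(1) _ assms(2)] by blast
  also have "\<dots> = a" using assms by (simp add: binoid_def)
  finally show ?thesis .
qed

lemma binoid_left_commute:
  assumes "binoid N add z om" "x \<in> N" "c \<in> N" "y \<in> N"
  shows "add x (add c y) = add c (add x y)"
proof -
  have "add x (add c y) = add (add x c) y" using binoid_assoc[OF assms] by simp
  also have "\<dots> = add (add c x) y" using binoid_commute[OF assms(1,2,3)] by simp
  also have "\<dots> = add c (add x y)" using binoid_assoc[OF assms(1,3,2,4)] .
  finally show ?thesis .
qed

lemma nmul_0 [simp]: "nmul add z 0 a = z"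
  by (simp add: nmul_def)

lemma nmul_Suc [simp]: "nmul add z (Suc k) a = add a (nmul add z k a)"
  by (simp add: nmul_def)

lemma nmul_closed:
  assumes "binoid N add z om" "a \<in> N"
  shows "nmul add z k a \<in> N"
  using assms by (induction k) (auto simp: binoid_def)

lemma nmul_add:
  assumes B: "binoid N add z om" and a: "a \<in> N"
  shows "nmul add z (m + n) a = add (nmul add z m a) (nmul add z n a)"
proof (induction m)
  case 0
  show ?case using binoid_zero_left[OF B nmul_closed[OF B a]] by simp
next
  case (Suc m)
  with a nmul_closed[OF B a] show ?case by (simp add: binoid_assoc[OF B])
qed

lemma nmul_mult:
  assumes B: "binoid N add z om" and a: "a \<in> N"
  shows "nmul add z (q * k) a = nmul add z q (nmul add z k a)"
proof (induction q)
  case (Suc q)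
  have "nmul add z (Suc q * k) a = add (nmul add z k a) (nmul add z (q * k) a)"
    using nmul_add[OF B a, of k "q * k"] by simp
  with Suc show ?case by simp
qed simp

lemma bsum_closed:
  assumes "binoid N add z om" "\<forall>i<s. f i \<in> N"
  shows "bsum add z f s \<in> N"
  using assms by (induction s) (auto simp: binoid_def)

lemma bsum_cong:
  assumes "\<forall>i<s. f i = h i"
  shows "bsum add z f s = bsum add z h s"
  using assms by (induction s) auto

lemma bsum_add_at:
  assumes B: "binoid N add z om" and c: "c \<in> N" and h: "\<forall>i<s. h i \<in> N" and j: "j < s"
  shows "bsum add z (\<lambda>i. if i = j then add c (h i) else h i) s = add c (bsum add z h s)"
  using h j
proof (induction s)
  case (Suc s)
  have hs: "bsum add z h s \<in> N" and hh: "h s \<in> N"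
    using bsum_closed[OF B] Suc.prems by auto
  show ?case
  proof (cases "j = s")
    case True
    have "bsum add z (\<lambda>i. if i = j then add c (h i) else h i) s = bsum add z h s"
      by (rule bsum_cong) (use True in auto)
    then show ?thesis using True binoid_left_commute[OF B hs c hh] by simp
  next
    case False
    with Suc have "bsum add z (\<lambda>i. if i = j then add c (h i) else h i) s = add c (bsum add z h s)"
      by auto
    then show ?thesis using False binoid_assoc[OF B c hs hh] by simp
  qed
qed simp

lemma add_nmul_mem_qideal:
  assumes "c \<in> I" "y \<in> N"
  shows "add (nmul add z q c) y \<in> qideal N add z q I"
  using assms unfolding qideal_def ideal_gen_def by blast

lemma bsum_nmul_mem_qideal:
  assumes B: "binoid N add z om" and u: "u \<in> N" and ns: "\<forall>i<s. ns i \<in> N"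
    and j: "j < s" and k: "nmul add z k (ns j) \<in> I" and le: "q * k \<le> a j"
  shows "add u (bsum add z (\<lambda>i. nmul add z (a i) (ns i)) s) \<in> qideal N add z q I"
proof -
  obtain d where d: "a j = q * k + d" using le le_Suc_ex by blast
  define c where "c = nmul add z q (nmul add z k (ns j))"
  define h where "h = (\<lambda>i. if i = j then nmul add z d (ns j) else nmul add z (a i) (ns i))"
  have cN: "c \<in> N" unfolding c_def using nmul_closed[OF B] ns j by auto
  have hN: "\<forall>i<s. h i \<in> N" unfolding h_def using nmul_closed[OF B] ns by auto
  have "nmul add z (a j) (ns j) = add c (nmul add z d (ns j))"
    unfolding d c_def using nmul_add[OF B] nmul_mult[OF B] ns j by auto
  then have "bsum add z (\<lambda>i. nmul add z (a i) (ns i)) s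
      = bsum add z (\<lambda>i. if i = j then add c (h i) else h i) s"
    by (intro bsum_cong) (auto simp: h_def)
  also have "\<dots> = add c (bsum add z h s)"
    using bsum_add_at[OF B cN hN j] .
  finally have "add u (bsum add z (\<lambda>i. nmul add z (a i) (ns i)) s)
      = add c (add u (bsum add z h s))"
    using binoid_left_commute[OF B u cN bsum_closed[OF B hN]] by simp
  moreover have "add u (bsum add z h s) \<in> N"
    using binoid_closed[OF B u bsum_closed[OF B hN]] .
  ultimately show ?thesis
    unfolding c_def using add_nmul_mem_qideal[OF k] by simp
qed

lemma binoid_diff_qideal_subset:
  assumes B: "binoid N add z om" and ns: "\<forall>i<s. ns i \<in> N"
    and k: "\<forall>j<s. nmul add z (k j) (ns j) \<in> I" and kK: "\<forall>j<s. k j \<le> K"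
    and rep: "\<forall>x\<in>N. x \<in> bunits N add z \<or>
           (\<exists>u\<in>bunits N add z. \<exists>a :: nat \<Rightarrow> nat.
               x = add u (bsum add z (\<lambda>j. nmul add z (a j) (ns j)) s))"
  shows "N - qideal N add z q I \<subseteq> bunits N add z \<union>
      (\<lambda>(u, a). add u (bsum add z (\<lambda>j. nmul add z (a j) (ns j)) s))
        ` (bunits N add z \<times> Pi\<^sub>E {..<s} (\<lambda>_. {..<q * K}))"
proof
  fix x assume x: "x \<in> N - qideal N add z q I"
  show "x \<in> bunits N add z \<union> (\<lambda>(u, a). add u (bsum add z (\<lambda>j. nmul add z (a j) (ns j)) s))
        ` (bunits N add z \<times> Pi\<^sub>E {..<s} (\<lambda>_. {..<q * K}))"
  proof (cases "x \<in> bunits N add z")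
    case False
    then obtain u a where u: "u \<in> bunits N add z"
      and xe: "x = add u (bsum add z (\<lambda>j. nmul add z (a j) (ns j)) s)"
      using rep x by auto
    have uN: "u \<in> N" using u by (simp add: bunits_def)
    have "a j < q * K" if j: "j < s" for j
    proof (rule ccontr)
      assume "\<not> a j < q * K"
      then have "q * k j \<le> a j" using kK j by (meson le_trans mult_le_mono2 not_less)
      then have "x \<in> qideal N add z q I"
        unfolding xe using bsum_nmul_mem_qideal[OF B uN ns j] k j by blast
      with x show False by simp
    qed
    then have "restrict a {..<s} \<in> Pi\<^sub>E {..<s} (\<lambda>_. {..<q * K})" by auto
    moreover have "x = add u (bsum add z (\<lambda>j. nmul add z (restrict a {..<s} j) (ns j)) s)"
      unfolding xe by (intro arg_cong[where f="add u"] bsum_cong) simp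
    ultimately show ?thesis using u
      by (intro UnI2 image_eqI[where x="(u, restrict a {..<s})"]) auto
  qed simp
qed

lemma card_union_image_times_le:
  assumes "finite U" "finite P"
  shows "card (U \<union> f ` (U \<times> P)) \<le> card U + card U * card P"
proof -
  have "card (U \<union> f ` (U \<times> P)) \<le> card U + card (f ` (U \<times> P))" by (rule card_Un_le)
  also have "card (f ` (U \<times> P)) \<le> card (U \<times> P)" by (rule card_image_le) (use assms in auto)
  finally show ?thesis by (simp add: card_cartesian_product)
qed

lemma card_binoid_diff_qideal_le:
  assumes B: "binoid N add z om" and finU: "finite (bunits N add z)"
    and ns: "\<forall>i<s. ns i \<in> N"
    and k: "\<forall>j<s. nmul add z (k j) (ns j) \<in> I" and kK: "\<forall>j<s. k j \<le> K"
    and rep: "\<forall>x\<in>N. x \<in> bunits N add z \<or>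
           (\<exists>u\<in>bunits N add z. \<exists>a :: nat \<Rightarrow> nat.
               x = add u (bsum add z (\<lambda>j. nmul add z (a j) (ns j)) s))"
  shows "finite (N - qideal N add z q I) \<and>
    card (N - qideal N add z q I) \<le> card (bunits N add z) + card (bunits N add z) * (q * K) ^ s"
proof -
  let ?P = "Pi\<^sub>E {..<s} (\<lambda>_. {..<q * K})"
  have finP: "finite ?P" by (simp add: finite_PiE)
  note sub = binoid_diff_qideal_subset[OF B ns k kK rep, of q]
  have "finite (N - qideal N add z q I)"
    by (rule finite_subset[OF sub]) (use finU finP in auto)
  moreover have "card (N - qideal N add z q I) \<le> card (bunits N add z) + card (bunits N add z) * card ?P"
    by (rule le_trans[OF card_mono[OF _ sub] card_union_image_times_le[OF finU finP]])
      (use finU finP in simp)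
  ultimately show ?thesis by (simp add: card_PiE)
qed

lemma card_nset_quot_ideal_act_le:
  assumes gen: "nset_generated_by N T act g r" and fin: "finite (N - J)"
  shows "finite (nset_quot T p (ideal_act act J T)) \<and>
    card (nset_quot T p (ideal_act act J T)) \<le> Suc (r * card (N - J))"
proof -
  let ?f = "\<lambda>(j, x). act x (g j)"
  have sub: "T - ideal_act act J T \<subseteq> ?f ` ({..<r} \<times> (N - J))"
  proof
    fix t assume t: "t \<in> T - ideal_act act J T"
    then obtain j x where j: "j < r" and x: "x \<in> N" and te: "t = act x (g j)"
      using gen by (auto simp: nset_generated_by_def)
    have "g j \<in> T" using gen j unfolding nset_generated_by_def by blast
    then have "x \<notin> J" using t te unfolding ideal_act_def by blast
    then show "t \<in> ?f ` ({..<r} \<times> (N - J))" using j x te by force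
  qed
  have fin_img: "finite (?f ` ({..<r} \<times> (N - J)))" using fin by simp
  have "card (T - ideal_act act J T) \<le> card (?f ` ({..<r} \<times> (N - J)))"
    by (rule card_mono[OF fin_img sub])
  also have "\<dots> \<le> r * card (N - J)"
    using card_image_le[of "{..<r} \<times> (N - J)" ?f] fin by (simp add: card_cartesian_product)
  finally have "card (T - ideal_act act J T) \<le> r * card (N - J)" .
  moreover have "nset_quot T p (ideal_act act J T) = insert p (T - ideal_act act J T)"
    by (auto simp: nset_quot_def)
  moreover have "finite (T - ideal_act act J T)" using finite_subset[OF sub fin_img] .
  ultimately show ?thesis by (simp add: card_insert_if)
qed

theorem mainTheorem13:
  fixes N :: "'a set" and add :: "'a \<Rightarrow> 'a \<Rightarrow> 'a" and z om :: 'a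
    and T :: "'b set" and p :: 'b and act :: "'a \<Rightarrow> 'b \<Rightarrow> 'b"
    and g :: "nat \<Rightarrow> 'b" and r :: nat and nn :: "'a set"
    and ns :: "nat \<Rightarrow> 'a" and s :: nat
  assumes "binoid N add z om"
    and "fin_gen_binoid N add z"
    and "semipositive N add z om"
    and "nset N add z om T p act"
    and "nset_generated_by N T act g r"
    and "primary_ideal N add z nn"
    and "\<forall>j<s. ns j \<in> bpos N add z"
    and "\<forall>x\<in>N. x \<in> bunits N add z \<or>
           (\<exists>u\<in>bunits N add z. \<exists>a :: nat \<Rightarrow> nat.
               x = add u (bsum add z (\<lambda>j. nmul add z (a j) (ns j)) s))"
  shows "\<exists>D :: real. \<forall>q :: nat. q \<ge> 1 \<longrightarrow>
           finite (nset_quot T p (ideal_act act (qideal N add z q nn) T)) \<and>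
           real (card (nset_quot T p (ideal_act act (qideal N add z q nn) T))) - 1
             \<le> real r * real (card (bunits N add z)) + D * real q ^ s"
proof -
  let ?u = "card (bunits N add z)"
  have finU: "finite (bunits N add z)" using assms(3) by (simp add: semipositive_def)
  have ns: "\<forall>j<s. ns j \<in> N" using assms(7) by (auto simp: bpos_def)
  have "\<forall>j<s. \<exists>kj. nmul add z kj (ns j) \<in> nn"
    using assms(6,7) unfolding primary_ideal_def by blast
  then obtain k where k: "\<forall>j<s. nmul add z (k j) (ns j) \<in> nn"
    by metis
  define K where "K = (\<Sum>j<s. k j)"
  have kK: "\<forall>j<s. k j \<le> K" unfolding K_def by (auto intro: member_le_sum)
  have "finite (nset_quot T p (ideal_act act (qideal N add z q nn) T)) \<and>
      real (card (nset_quot T p (ideal_act act (qideal N add z q nn) T))) - 1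
        \<le> real r * real ?u + (real r * real ?u * real K ^ s) * real q ^ s" for q
  proof -
    let ?X = "nset_quot T p (ideal_act act (qideal N add z q nn) T)"
    note NQ = card_binoid_diff_qideal_le[OF assms(1) finU ns k kK assms(8), of q]
    note quot = card_nset_quot_ideal_act_le[OF assms(5) conjunct1[OF NQ], of p]
    have "card ?X \<le> Suc (r * (?u + ?u * (q * K) ^ s))"
      using quot NQ by (meson Suc_le_mono le_trans mult_le_mono2)
    then have "real (card ?X) \<le> real (Suc (r * (?u + ?u * (q * K) ^ s)))"
      by (simp only: of_nat_le_iff)
    then have "real (card ?X) - 1 \<le> real r * (real ?u + real ?u * (real q * real K) ^ s)"
      by simp
    then show ?thesis using quot by (simp add: algebra_simps power_mult_distrib)
  qed
  then show ?thesis by blast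
qed

end
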